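(* Let $d\ge 4$. If every configuration in $Q^3_d$ of type $\varphi_1$, $\varphi_2$, $\varphi_3$ or $\varphi_4$ is covered, then $Q^3_d$ is loose Hamilton connected.
   Context: $Q^3_d$ is the $3$-uniform hypergraph on $V_d=\{0,1,2\}^d$ whose edges are the triples of pairwise distinct sequences agreeing in $d-1$ coordinates. A loose path from $v_0$ to $v_{2\ell}$ consists of distinct vertices $v_0,\dots,v_{2\ell}$ and distinct edges $e_i=\{v_{2i-2},v_{2i-1},v_{2i}\}$, $i=1,\dots,\ell$. A hypergraph is loose Hamilton connected if for any two distinct vertices $a,b$ there is a loose path from $a$ to $b$ containing all vertices. A configuration is an ordered $4$-tuple $(a,b,x,y)$ of pairwise distinct vertices of $V_d$; it is covered if there is a loose path from $a$ to $b$ whose vertex set is exactly $V_d\setminus\{x,y\}$. For $v\in V_d$ write $v_i$ for its $i$-th coordinate and $v_{[k]}=(v_1,\dots,v_k)$. A symmetry is a bijection of $V_d$ obtained by permuting the coordinates and, independently in each coordinate, permuting the values $\{0,1,2\}$. A configuration $c=(a,b,x,y)$ is of a given type if, after applying some symmetry to all four vertices and possibly interchanging $x$ and $y$, the resulting configuration (still denoted $(a,b,x,y)$) satisfies: $\varphi_1$: $a_d=x_d=0$, $b_d=1$, $y_d=2$, $a_{[d-1]}\notin\{b_{[d-1]},x_{[d-1]},y_{[d-1]}\}$, and there is $i\in[d-1]$ with $b_i\in\{a_i,x_i,y_i\}$; $\varphi_2$: $a_d=b_d=0$, $x_d=1$, $y_d=2$, and either $a_{[d-1]}\notin\{b_{[d-1]},x_{[d-1]},y_{[d-1]}\}$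 or $b_{[d-1]}\notin\{a_{[d-1]},x_{[d-1]},y_{[d-1]}\}$, and there are two distinct $i,i'\in[d-1]$, $u\in\{a,b\}$, $w\in\{x,y\}$ with $u_i=w_i$ and $u_{i'}=w_{i'}$; $\varphi_3$: $a_d=x_d=0$, $b_d=y_d=1$, and there is $i\in[d-1]$ with $a_i=y_i$ or $b_i=x_i$; $\varphi_4$: $a_d=0$, $b_d=x_d=1$, $y_d=2$, $b_{[d-1]}\notin\{a_{[d-1]},x_{[d-1]},y_{[d-1]}\}$, and there is $i\in[d-1]$ with $a_i\in\{b_i,x_i,y_i\}$. *)

theory Defs
  imports Main
begin

text \<open>Vertices of Q^3_d: sequences of length d over {0,1,2}, as lists; the paper's
coordinate i (1-based) is list index i-1.\<close>

definition verts :: "nat \<Rightarrow> nat list set" where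
  "verts d = {v. length v = d \<and> set v \<subseteq> {0,1,2}}"

definition is_edge :: "nat \<Rightarrow> nat list set \<Rightarrow> bool" where
  "is_edge d e \<longleftrightarrow> (\<exists>u v w. e = {u, v, w} \<and> u \<in> verts d \<and> v \<in> verts d \<and> w \<in> verts d
     \<and> u \<noteq> v \<and> u \<noteq> w \<and> v \<noteq> w
     \<and> (\<exists>i<d. \<forall>j<d. j \<noteq> i \<longrightarrow> u ! j = v ! j \<and> v ! j = w ! j))"

definition path_edge :: "nat list list \<Rightarrow> nat \<Rightarrow> nat list set" where
  "path_edge vs i = {vs ! (2*i), vs ! (2*i+1), vs ! (2*i+2)}"

definition loose_path :: "nat \<Rightarrow> nat list list \<Rightarrow> bool" where
  "loose_path d vs \<longleftrightarrow> odd (length vs) \<and> distinct vs \<and> set vs \<subseteq> verts d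
     \<and> (\<forall>i. 2*i+2 < length vs \<longrightarrow> is_edge d (path_edge vs i))
     \<and> inj_on (path_edge vs) {i. 2*i+2 < length vs}"

definition loose_ham_connected :: "nat \<Rightarrow> bool" where
  "loose_ham_connected d \<longleftrightarrow> (\<forall>a\<in>verts d. \<forall>b\<in>verts d. a \<noteq> b \<longrightarrow>
     (\<exists>vs. loose_path d vs \<and> hd vs = a \<and> last vs = b \<and> set vs = verts d))"

definition config :: "nat \<Rightarrow> nat list \<Rightarrow> nat list \<Rightarrow> nat list \<Rightarrow> nat list \<Rightarrow> bool" where
  "config d a b x y \<longleftrightarrow> a \<in> verts d \<and> b \<in> verts d \<and> x \<in> verts d \<and> y \<in> verts d
     \<and> distinct [a, b, x, y]"

definition covered :: "nat \<Rightarrow> nat list \<Rightarrow> nat list \<Rightarrow> nat list \<Rightarrow> nat list \<Rightarrow> bool" where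
  "covered d a b x y \<longleftrightarrow> (\<exists>vs. loose_path d vs \<and> hd vs = a \<and> last vs = b
     \<and> set vs = verts d - {x, y})"

definition sym_map :: "nat \<Rightarrow> (nat \<Rightarrow> nat) \<Rightarrow> (nat \<Rightarrow> nat \<Rightarrow> nat) \<Rightarrow> nat list \<Rightarrow> nat list" where
  "sym_map d \<sigma> \<tau> v = map (\<lambda>i. \<tau> i (v ! \<sigma> i)) [0..<d]"

definition is_symmetry :: "nat \<Rightarrow> (nat \<Rightarrow> nat) \<Rightarrow> (nat \<Rightarrow> nat \<Rightarrow> nat) \<Rightarrow> bool" where
  "is_symmetry d \<sigma> \<tau> \<longleftrightarrow> bij_betw \<sigma> {..<d} {..<d}
     \<and> (\<forall>i<d. bij_betw (\<tau> i) {0,1,2} {0,1,2})"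

text \<open>Coordinate d is index d-1; v_[d-1] is take (d-1) v; i \<in> [d-1] is index i < d-1.\<close>

definition phi1 :: "nat \<Rightarrow> nat list \<Rightarrow> nat list \<Rightarrow> nat list \<Rightarrow> nat list \<Rightarrow> bool" where
  "phi1 d a b x y \<longleftrightarrow> a ! (d-1) = 0 \<and> x ! (d-1) = 0 \<and> b ! (d-1) = 1 \<and> y ! (d-1) = 2
     \<and> take (d-1) a \<notin> {take (d-1) b, take (d-1) x, take (d-1) y}
     \<and> (\<exists>i<d-1. b ! i \<in> {a ! i, x ! i, y ! i})"

definition phi2 :: "nat \<Rightarrow> nat list \<Rightarrow> nat list \<Rightarrow> nat list \<Rightarrow> nat list \<Rightarrow> bool" where
  "phi2 d a b x y \<longleftrightarrow> a ! (d-1) = 0 \<and> b ! (d-1) = 0 \<and> x ! (d-1) = 1 \<and> y ! (d-1) = 2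
     \<and> (take (d-1) a \<notin> {take (d-1) b, take (d-1) x, take (d-1) y}
        \<or> take (d-1) b \<notin> {take (d-1) a, take (d-1) x, take (d-1) y})
     \<and> (\<exists>i<d-1. \<exists>i'<d-1. i \<noteq> i' \<and> (\<exists>u\<in>{a, b}. \<exists>w\<in>{x, y}. u ! i = w ! i \<and> u ! i' = w ! i'))"

definition phi3 :: "nat \<Rightarrow> nat list \<Rightarrow> nat list \<Rightarrow> nat list \<Rightarrow> nat list \<Rightarrow> bool" where
  "phi3 d a b x y \<longleftrightarrow> a ! (d-1) = 0 \<and> x ! (d-1) = 0 \<and> b ! (d-1) = 1 \<and> y ! (d-1) = 1
     \<and> (\<exists>i<d-1. a ! i = y ! i \<or> b ! i = x ! i)"

definition phi4 :: "nat \<Rightarrow> nat list \<Rightarrow> nat list \<Rightarrow> nat list \<Rightarrow> nat list \<Rightarrow> bool" where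
  "phi4 d a b x y \<longleftrightarrow> a ! (d-1) = 0 \<and> b ! (d-1) = 1 \<and> x ! (d-1) = 1 \<and> y ! (d-1) = 2
     \<and> take (d-1) b \<notin> {take (d-1) a, take (d-1) x, take (d-1) y}
     \<and> (\<exists>i<d-1. a ! i \<in> {b ! i, x ! i, y ! i})"

definition of_type ::
  "(nat \<Rightarrow> nat list \<Rightarrow> nat list \<Rightarrow> nat list \<Rightarrow> nat list \<Rightarrow> bool)
   \<Rightarrow> nat \<Rightarrow> nat list \<Rightarrow> nat list \<Rightarrow> nat list \<Rightarrow> nat list \<Rightarrow> bool" where
  "of_type \<phi> d a b x y \<longleftrightarrow> (\<exists>\<sigma> \<tau>. is_symmetry d \<sigma> \<tau> \<and>
     (let s = sym_map d \<sigma> \<tau> in \<phi> d (s a) (s b) (s x) (s y) \<or> \<phi> d (s a) (s b) (s y) (s x)))"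

end

theory Submission
  imports Defs "HOL-Combinatorics.Transposition"
begin

(* Given a \<noteq> b, fix a coordinate k with a_k \<noteq> b_k and another coordinate j. On the line
   through b in direction j, let c be the point whose j-th entry avoids a_j and b_j, and y the
   third point. The symmetry that swaps coordinate j with the last one and relabels its values
   so that a_j goes to 0 and c_j to 1 (hence {y_j, b_j} to {0, 2}) makes (a, c, y, b) of type
   phi1 up to interchanging x and y; coordinate k keeps a_{[d-1]} off the line. A loose path from
   a to c through all vertices but y and b then extends by the edge {c, y, b} to a loose Hamilton
   path from a to b. So only configurations of type phi1 are needed, and only d \<ge> 2. *)

lemma is_edge_distinct:
  assumes "is_edge d {u, v, w}"
  shows "u \<noteq> v" "u \<noteq> w" "v \<noteq> w" "{u, v, w} \<subseteq> verts d"
proof -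
  obtain u' v' w' where eq: "{u, v, w} = {u', v', w'}" and "distinct [u', v', w']"
    and "{u', v', w'} \<subseteq> verts d"
    using assms unfolding is_edge_def by auto
  then have "card {u, v, w} = 3" by simp
  then show "u \<noteq> v" "u \<noteq> w" "v \<noteq> w" by (auto simp: card_insert_if split: if_splits)
  show "{u, v, w} \<subseteq> verts d" using eq \<open>{u', v', w'} \<subseteq> verts d\<close> by simp
qed

lemma verts_nth:
  assumes "v \<in> verts d" "i < d"
  shows "v ! i \<in> {0,1,2}"
  using assms nth_mem[of i v] unfolding verts_def by blast

lemma verts_list_update:
  assumes "v \<in> verts d" "t \<in> {0,1,2}"
  shows "v[j := t] \<in> verts d"
  using assms set_update_subset_insert[of v j t] by (auto simp: verts_def)

lemma is_edge_line:
  assumes "v \<in> verts d" "j < d" "{t, t', t''} \<subseteq> {0,1,2}" "distinct [t, t', t'']"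
  shows "is_edge d {v[j := t], v[j := t'], v[j := t'']}"
proof -
  have "length v = d" using assms(1) by (simp add: verts_def)
  then have "distinct [v[j := t], v[j := t'], v[j := t'']]"
    using assms(2,4) by (auto dest: arg_cong[where f = "\<lambda>w. w ! j"])
  moreover have "\<forall>l<d. l \<noteq> j \<longrightarrow> v[j := t] ! l = v[j := t'] ! l \<and> v[j := t'] ! l = v[j := t''] ! l"
    by simp
  moreover have "{v[j := t], v[j := t'], v[j := t'']} \<subseteq> verts d"
    using assms(1,3) verts_list_update by auto
  ultimately show ?thesis
    unfolding is_edge_def using assms(2) by (intro exI conjI) auto
qed

lemma loose_path_append_edge:
  assumes lp: "loose_path d vs" and e: "is_edge d {last vs, y, z}"
    and y: "y \<notin> set vs" and z: "z \<notin> set vs"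
  shows "loose_path d (vs @ [y, z])"
proof -
  let ?w = "vs @ [y, z]"
  have "odd (length vs)" and ed: "\<And>i. 2*i+2 < length vs \<Longrightarrow> is_edge d (path_edge vs i)"
    and inj: "inj_on (path_edge vs) {i. 2*i+2 < length vs}"
    using lp unfolding loose_path_def by auto
  then obtain m where m: "length vs = 2*m+1" by (metis oddE)
  have old: "path_edge ?w i = path_edge vs i" "path_edge vs i \<subseteq> set vs"
    if "2*i+2 < length vs" for i
    using that by (auto simp: path_edge_def nth_append)
  have "last vs = vs ! (2*m)"
    using m by (simp add: last_conv_nth[of vs] flip: length_greater_0_conv)
  then have new: "path_edge ?w m = {last vs, y, z}"
    using m by (simp add: path_edge_def nth_append)
  have idx: "2*i+2 < length vs \<or> i = m" if "2*i+2 < length ?w" for i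
    using that m by auto
  have "is_edge d (path_edge ?w i)" if "2*i+2 < length ?w" for i
    using idx[OF that] old ed new e by metis
  moreover have "inj_on (path_edge ?w) {i. 2*i+2 < length ?w}"
  proof (rule inj_onI)
    fix i i' assume "i \<in> {i. 2*i+2 < length ?w}" "i' \<in> {i. 2*i+2 < length ?w}"
      and eq: "path_edge ?w i = path_edge ?w i'"
    \<comment> \<open>only the new edge contains the new vertex y\<close>
    have "path_edge ?w i \<noteq> path_edge ?w m" if "2*i+2 < length vs" for i
      using that old new y by blast
    then show "i = i'"
      using idx \<open>i \<in> _\<close> \<open>i' \<in> _\<close> eq inj old unfolding inj_on_def by (metis mem_Collect_eq)
  qed
  moreover have "distinct ?w" "set ?w \<subseteq> verts d"
    using lp y z is_edge_distinct[OF e] unfolding loose_path_def by auto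
  ultimately show ?thesis
    using \<open>odd (length vs)\<close> unfolding loose_path_def by auto
qed

lemma loose_ham_path_of_covered:
  assumes "covered d a c y b" "is_edge d {c, y, b}"
  shows "\<exists>vs. loose_path d vs \<and> hd vs = a \<and> last vs = b \<and> set vs = verts d"
proof -
  obtain vs where vs: "loose_path d vs" "hd vs = a" "last vs = c" "set vs = verts d - {y, b}"
    using assms(1) unfolding covered_def by blast
  have "vs \<noteq> []" using vs(1) by (auto simp: loose_path_def)
  moreover have "loose_path d (vs @ [y, b])"
    using loose_path_append_edge vs assms(2) by blast
  moreover have "set (vs @ [y, b]) = verts d"
    using vs(4) is_edge_distinct[OF assms(2)] by auto
  ultimately show ?thesis using vs(2) by (intro exI[of _ "vs @ [y, b]"]) simp
qed

lemma sym_map_nth: "i < d \<Longrightarrow> sym_map d \<sigma> \<tau> v ! i = \<tau> i (v ! \<sigma> i)"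
  by (simp add: sym_map_def)

lemma is_symmetry_transpose_relabel:
  assumes "i < d" "j < d" "bij_betw \<pi> {0,1,2} {0,1,2}"
  shows "is_symmetry d (transpose i j) (\<lambda>l. if l = i then \<pi> else id)"
  using assms by (simp add: is_symmetry_def)

lemma of_type_swap: "of_type \<phi> d a b x y \<longleftrightarrow> of_type \<phi> d a b y x"
  unfolding of_type_def by metis

definition relabel :: "nat \<Rightarrow> nat \<Rightarrow> nat \<Rightarrow> nat" where
  "relabel t0 t1 t = (if t = t0 then 0 else if t = t1 then 1 else 2)"

lemma bij_betw_relabel:
  assumes "t0 \<in> {0,1,2}" "t1 \<in> {0,1,2}" "t0 \<noteq> t1"
  shows "bij_betw (relabel t0 t1) {0,1,2} {0,1,2}"
proof -
  have "(t0, t1) \<in> {(0,1), (0,2), (1,0), (1,2), (2,0), (2,1)}"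
    using assms by auto
  then show ?thesis
    by (auto simp: bij_betw_def inj_on_def relabel_def)
qed

lemma of_type_phi1_line:
  assumes a: "a \<in> verts d" and b: "b \<in> verts d" and "2 \<le> d"
    and "j < d" "k < d" "k \<noteq> j" "a ! k \<noteq> b ! k"
    and "{t, t'} \<subseteq> {0,1,2}" "distinct [a ! j, t, t']"
  shows "of_type phi1 d a (b[j := t]) (b[j := a ! j]) (b[j := t'])"
proof -
  define \<sigma> where "\<sigma> = transpose (d - 1) j"
  define \<tau> where "\<tau> = (\<lambda>l. if l = d - 1 then relabel (a ! j) t else id)"
  define s where "s = sym_map d \<sigma> \<tau>"
  have "a ! j \<in> {0,1,2}" using verts_nth a \<open>j < d\<close> .
  then have "is_symmetry d \<sigma> \<tau>"
    unfolding \<sigma>_def \<tau>_def using assms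
    by (intro is_symmetry_transpose_relabel bij_betw_relabel) auto
  have s_last: "s v ! (d - 1) = relabel (a ! j) t (v ! j)" for v
    using \<open>2 \<le> d\<close> by (simp add: s_def sym_map_nth \<sigma>_def \<tau>_def)
  have s_init: "s v ! i = v ! \<sigma> i" "\<sigma> i \<noteq> j" if "i < d - 1" for v i
    using that \<open>j < d\<close> by (auto simp: s_def sym_map_nth \<sigma>_def \<tau>_def transpose_eq_iff)
  have b_lb: "length b = d" using b by (simp add: verts_def)
  have init_line: "s (b[j := r]) ! i = b ! \<sigma> i" if "i < d - 1" for r i
    using s_init[OF that] by simp
  \<comment> \<open>the coordinate k, where a leaves the line, is moved to \<sigma> k < d - 1\<close>
  have k: "\<sigma> k < d - 1" "\<sigma> (\<sigma> k) = k"
    using assms(4-6) by (auto simp: \<sigma>_def transpose_def)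
  have take_ne: "take (d - 1) (s a) \<noteq> take (d - 1) (s (b[j := r]))" for r
  proof
    assume "take (d - 1) (s a) = take (d - 1) (s (b[j := r]))"
    then have "s a ! \<sigma> k = s (b[j := r]) ! \<sigma> k"
      using k(1) by (metis nth_take)
    then show False
      using s_init(1)[OF k(1)] init_line[OF k(1)] k(2) \<open>a ! k \<noteq> b ! k\<close> by simp
  qed
  have "\<exists>i<d - 1. s (b[j := t]) ! i \<in> {s a ! i, s (b[j := a ! j]) ! i, s (b[j := t']) ! i}"
    using init_line[of 0] \<open>2 \<le> d\<close> by (intro exI[of _ 0]) auto
  then have "phi1 d (s a) (s (b[j := t])) (s (b[j := a ! j])) (s (b[j := t']))"
    unfolding phi1_def using s_last take_ne assms(4,9) b_lb by (auto simp: relabel_def)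
  then show ?thesis
    unfolding of_type_def Let_def s_def using \<open>is_symmetry d \<sigma> \<tau>\<close> by blast
qed

lemma complete_to_three_values:
  fixes p q :: nat
  assumes "p \<in> {0,1,2}" "q \<in> {0,1,2}"
  obtains t t' where "{t, t'} \<subseteq> {0,1,2}" "distinct [p, t, t']" "q \<in> {p, t'}"
proof -
  have "\<exists>t\<in>{0,1,2}. \<exists>t'\<in>{0,1,2}. distinct [p, t, t'] \<and> q \<in> {p, t'}"
    using assms by (cases "p = q") auto
  then show thesis using that by blast
qed

lemma phi1_config_on_line:
  assumes a: "a \<in> verts d" and b: "b \<in> verts d" and "a \<noteq> b" "2 \<le> d"
  obtains c y where "config d a c y b" "of_type phi1 d a c y b" "is_edge d {c, y, b}"
proof -
  have len: "length a = d" "length b = d" using a b by (auto simp: verts_def)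
  then obtain k where k: "k < d" "a ! k \<noteq> b ! k"
    using \<open>a \<noteq> b\<close> nth_equalityI by metis
  define j where "j = (if k = 0 then 1 else 0 :: nat)"
  have j: "j < d" "k \<noteq> j" using \<open>2 \<le> d\<close> by (auto simp: j_def)
  have "a ! j \<in> {0,1,2}" "b ! j \<in> {0,1,2}" using verts_nth a b j(1) by auto
  then obtain t t' where t: "{t, t'} \<subseteq> {0,1,2}" "distinct [a ! j, t, t']" "b ! j \<in> {a ! j, t'}"
    by (rule complete_to_three_values)
  define c where "c = b[j := t]"
  obtain y where y: "{y, b} = {b[j := a ! j], b[j := t']}" "y \<noteq> b"
  proof (cases "b ! j = a ! j")
    case True
    then have "b = b[j := a ! j]" by (metis list_update_id)
    then show thesis
      using that[of "b[j := t']"] t(2) len j(1)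
      by (metis distinct_length_2_or_more insert_commute nth_list_update_eq)
  next
    case False
    then have "b = b[j := t']" using t(3) by (metis insertE list_update_id singletonD)
    then show thesis
      using that[of "b[j := a ! j]"] t(2) len j(1)
      by (metis distinct_length_2_or_more nth_list_update_eq)
  qed
  have edge: "is_edge d {c, y, b}"
  proof -
    have "is_edge d {b[j := t], b[j := a ! j], b[j := t']}"
      using is_edge_line[OF b j(1)] t(1,2) \<open>a ! j \<in> {0,1,2}\<close> by auto
    then show ?thesis using y(1) by (simp add: c_def insert_commute)
  qed
  have "of_type phi1 d a c (b[j := a ! j]) (b[j := t'])"
    unfolding c_def using of_type_phi1_line[OF a b \<open>2 \<le> d\<close> j(1) k(1) j(2) k(2) t(1,2)] .
  moreover have "y = b[j := a ! j] \<and> b = b[j := t'] \<or> y = b[j := t'] \<and> b = b[j := a ! j]"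
    using y(1) by (simp add: doubleton_eq_iff)
  ultimately have "of_type phi1 d a c y b"
    using of_type_swap by metis
  moreover have "config d a c y b"
  proof -
    have "a \<noteq> b[j := r]" for r using k j(2) by auto
    then have "a \<notin> {c, y, b}" using y(1) by (auto simp: c_def)
    then show ?thesis
      using is_edge_distinct[OF edge] a by (auto simp: config_def)
  qed
  ultimately show thesis using that edge by blast
qed

theorem proposition1p6:
  fixes d :: nat
  assumes "d \<ge> 4"
    and "\<forall>a b x y. config d a b x y \<and>
           (of_type phi1 d a b x y \<or> of_type phi2 d a b x y \<or> of_type phi3 d a b x y
            \<or> of_type phi4 d a b x y) \<longrightarrow> covered d a b x y"
  shows "loose_ham_connected d"
  unfolding loose_ham_connected_def
proof (intro ballI impI)
  fix a b assume "a \<in> verts d" "b \<in> verts d" "a \<noteq> b"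
  moreover have "2 \<le> d" using \<open>d \<ge> 4\<close> by simp
  ultimately obtain c y where "config d a c y b" "of_type phi1 d a c y b"
    and edge: "is_edge d {c, y, b}"
    by (rule phi1_config_on_line)
  then have "covered d a c y b" using assms(2) by blast
  then show "\<exists>vs. loose_path d vs \<and> hd vs = a \<and> last vs = b \<and> set vs = verts d"
    using loose_ham_path_of_covered edge by blast
qed

end
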